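(* Let $(A,B,\mathfrak H)$ be a P-module. Then either every non-zero vector of $\mathfrak H$ is annihilated by all rays, or there exists a vector of $\mathfrak H$ contained in some periodic ray $p$.
   Context: A P-module is $(A,B,\mathfrak H)$ with $\mathfrak H$ a finite-dimensional complex Hilbert space and $A,B$ operators with $A^*A+B^*B=\mathrm{id}$. A ray is an infinite binary sequence $p=x_1x_2\cdots$; $p_n=x_1\cdots x_n$. For a finite binary word $w=x_1\cdots x_n$, $w\xi:=X_{x_n}\cdots X_{x_1}\xi$ where $X_0=A$, $X_1=B$. A non-zero vector $\xi$ is contained in the ray $p$ if $\|p_n\xi\|=\|\xi\|$ for all $n$; it is annihilated by all rays if $\lim_n\|q_n\xi\|=0$ for every ray $q$. A ray is periodic if it equals $w^\infty$ for some finite non-empty word $w$. *)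

theory Defs
  imports "HOL-Analysis.Analysis"
begin

text \<open>The finite-dimensional complex Hilbert space is modelled as complex ^ 'n
  (standard inner product, Euclidean norm); operators are complex matrices.\<close>

definition adjoint_mat :: "complex ^ 'n ^ 'n \<Rightarrow> complex ^ 'n ^ 'n" where
  "adjoint_mat M = (\<chi> i j. cnj (M $ j $ i))"

definition P_module :: "complex ^ 'n ^ 'n \<Rightarrow> complex ^ 'n ^ 'n \<Rightarrow> bool" where
  "P_module A B \<longleftrightarrow> adjoint_mat A ** A + adjoint_mat B ** B = mat 1"

definition word_act :: "complex ^ 'n ^ 'n \<Rightarrow> complex ^ 'n ^ 'n \<Rightarrow> bool list \<Rightarrow> complex ^ 'n \<Rightarrow> complex ^ 'n" where
  "word_act A B w \<xi> = fold (\<lambda>b v. (if b then B else A) *v v) w \<xi>"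

definition ray_prefix :: "(nat \<Rightarrow> bool) \<Rightarrow> nat \<Rightarrow> bool list" where
  "ray_prefix p n = map p [0..<n]"

definition contained_in_ray :: "complex ^ 'n ^ 'n \<Rightarrow> complex ^ 'n ^ 'n \<Rightarrow> complex ^ 'n \<Rightarrow> (nat \<Rightarrow> bool) \<Rightarrow> bool" where
  "contained_in_ray A B \<xi> p \<longleftrightarrow> \<xi> \<noteq> 0 \<and> (\<forall>n. norm (word_act A B (ray_prefix p n) \<xi>) = norm \<xi>)"

definition annihilated_by_all_rays :: "complex ^ 'n ^ 'n \<Rightarrow> complex ^ 'n ^ 'n \<Rightarrow> complex ^ 'n \<Rightarrow> bool" where
  "annihilated_by_all_rays A B \<xi> \<longleftrightarrow>
     (\<forall>q. (\<lambda>n. norm (word_act A B (ray_prefix q n) \<xi>)) \<longlonglongrightarrow> 0)"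

definition periodic_ray :: "(nat \<Rightarrow> bool) \<Rightarrow> bool" where
  "periodic_ray p \<longleftrightarrow> (\<exists>w. w \<noteq> [] \<and> (\<forall>i. p i = w ! (i mod length w)))"

end

theory Submission
  imports Defs
begin

text \<open>Call \<open>x\<close> a ray vector if each \<open>(A + B)\<^sup>t x\<close> is killed by \<open>A\<close> or by
  \<open>B\<close>: its \<open>(A + B)\<close>-orbit then follows a ray, and \<open>A\<^sup>*A + B\<^sup>*B = 1\<close> makes the norm
  constant along it. If some vector is not annihilated along a ray, the norms along that ray
  decrease to a positive limit, so the components dropped at each step tend to zero and every
  limit point of the trajectory is a non-zero ray vector.
  Among non-zero ray vectors pick \<open>y\<close> maximising the dimension of its pattern space, the
  vectors whose kernel pattern along the orbit refines that of \<open>y\<close>. Since \<open>A + B\<close> is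
  isometric on pattern spaces, this dimension is constant along the orbit of \<open>y\<close>. Kernel
  patterns are locally constant near non-zero ray vectors and a pattern space is determined by
  finitely many times, so two orbit points near a common limit point have the same pattern
  space. The kernel pattern of the orbit is therefore periodic from the earlier of the two on,
  and the periodic ray it defines contains that orbit point.\<close>

lemma subspace_decseq_stabilizes:
  fixes S :: "nat \<Rightarrow> 'a::euclidean_space set"
  assumes subspace: "\<And>n. subspace (S n)" and dec: "decseq S"
  shows "\<exists>L. S L \<subseteq> (\<Inter>n. S n)"
proof -
  obtain L where L: "\<And>n. dim (S L) \<le> dim (S n)"
    using ex_has_least_nat[of "\<lambda>_. True" 0 "\<lambda>n. dim (S n)"] by blast
  have "S L \<subseteq> S n" for n
  proof -
    have "S (max L n) \<subseteq> S L" "S (max L n) \<subseteq> S n"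
      using dec by (simp_all add: decseq_def)
    moreover have "S (max L n) = S L"
      using subspace_dim_equal[OF subspace subspace _ L] \<open>S (max L n) \<subseteq> S L\<close> by blast
    ultimately show ?thesis by simp
  qed
  then show ?thesis by blast
qed

lemma tendsto_linear:
  fixes f :: "'a::euclidean_space \<Rightarrow> 'b::real_normed_vector"
  assumes "linear f" and "(X \<longlongrightarrow> x) F"
  shows "((\<lambda>j. f (X j)) \<longlongrightarrow> f x) F"
  using assms linear_conv_bounded_linear bounded_linear.tendsto by blast

locale isometric_splitting =
  fixes A B :: "'a::euclidean_space \<Rightarrow> 'a"
  assumes linear_A: "linear A" and linear_B: "linear B"
    and norm_split: "norm (A x) ^ 2 + norm (B x) ^ 2 = norm x ^ 2"
begin

definition sum_op :: "'a \<Rightarrow> 'a" where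
  "sum_op x = A x + B x"

definition ray_vector :: "'a \<Rightarrow> bool" where
  "ray_vector x \<longleftrightarrow> (\<forall>t. A ((sum_op ^^ t) x) = 0 \<or> B ((sum_op ^^ t) x) = 0)"

definition pattern_space :: "nat set \<Rightarrow> 'a \<Rightarrow> 'a set" where
  "pattern_space T y =
     {x. \<forall>t\<in>T. (A ((sum_op ^^ t) y) = 0 \<longrightarrow> A ((sum_op ^^ t) x) = 0)
              \<and> (B ((sum_op ^^ t) y) = 0 \<longrightarrow> B ((sum_op ^^ t) x) = 0)}"

lemma linear_sum_op: "linear sum_op"
  unfolding sum_op_def by (rule linear_compose_add[OF linear_A linear_B])

lemma linear_sum_op_iter: "linear (sum_op ^^ t)"
proof (induction t)
  case 0
  show ?case by (simp add: linear_id[unfolded id_def])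
next
  case (Suc t)
  with linear_sum_op show ?case by (simp add: linear_compose[unfolded o_def])
qed

lemma norm_B_of_kernel_A: "A x = 0 \<Longrightarrow> norm (B x) = norm x"
  and norm_A_of_kernel_B: "B x = 0 \<Longrightarrow> norm (A x) = norm x"
  using norm_split[of x] by simp_all

lemma common_kernel_zero: "A x = 0 \<Longrightarrow> B x = 0 \<Longrightarrow> x = 0"
  using norm_B_of_kernel_A by fastforce

lemma sum_op_of_kernel_A: "A x = 0 \<Longrightarrow> sum_op x = B x"
  and sum_op_of_kernel_B: "B x = 0 \<Longrightarrow> sum_op x = A x"
  by (simp_all add: sum_op_def)

lemma norm_sum_op_of_kernel: "A x = 0 \<or> B x = 0 \<Longrightarrow> norm (sum_op x) = norm x"
  using norm_B_of_kernel_A norm_A_of_kernel_B by (auto simp: sum_op_of_kernel_A sum_op_of_kernel_B)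

lemma ray_vector_norm_iter: "ray_vector x \<Longrightarrow> norm ((sum_op ^^ t) x) = norm x"
  by (induction t) (simp_all add: ray_vector_def norm_sum_op_of_kernel)

lemma sum_op_iter_iter: "(sum_op ^^ t) ((sum_op ^^ s) x) = (sum_op ^^ (t + s)) x"
  by (simp add: funpow_add)

lemma ray_vector_iter: "ray_vector x \<Longrightarrow> ray_vector ((sum_op ^^ s) x)"
  by (simp add: ray_vector_def sum_op_iter_iter)

lemma subspace_pattern_space: "subspace (pattern_space T y)"
proof -
  have subspace_kernels: "subspace {x. \<forall>t. (P t \<longrightarrow> f t x = 0) \<and> (Q t \<longrightarrow> g t x = 0)}"
    if "\<And>t. linear (f t)" "\<And>t. linear (g t)" for P Q f g
    using that unfolding subspace_def by (auto simp: linear_0 linear_add linear_scale)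
  have lin: "linear (\<lambda>x. A ((sum_op ^^ t) x))" "linear (\<lambda>x. B ((sum_op ^^ t) x))" for t
    using linear_compose[OF linear_sum_op_iter linear_A] linear_compose[OF linear_sum_op_iter linear_B]
    by (simp_all add: o_def)
  have eq: "pattern_space T y =
      {x. \<forall>t. (t \<in> T \<and> A ((sum_op ^^ t) y) = 0 \<longrightarrow> A ((sum_op ^^ t) x) = 0)
             \<and> (t \<in> T \<and> B ((sum_op ^^ t) y) = 0 \<longrightarrow> B ((sum_op ^^ t) x) = 0)}"
    unfolding pattern_space_def by blast
  show ?thesis
    unfolding eq by (rule subspace_kernels) (fact lin)+
qed

lemma self_in_pattern_space: "y \<in> pattern_space T y"
  by (simp add: pattern_space_def)

lemma pattern_space_antimono: "T \<subseteq> T' \<Longrightarrow> pattern_space T' y \<subseteq> pattern_space T y"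
  by (auto simp: pattern_space_def)

lemma ray_vector_pattern_space: "ray_vector y \<Longrightarrow> x \<in> pattern_space UNIV y \<Longrightarrow> ray_vector x"
  by (auto simp: ray_vector_def pattern_space_def)

lemma sum_op_iter_image_pattern_space:
  "(sum_op ^^ s) ` pattern_space UNIV y \<subseteq> pattern_space UNIV ((sum_op ^^ s) y)"
  by (auto simp: pattern_space_def sum_op_iter_iter)

text \<open>\<^term>\<open>sum_op ^^ s\<close> is isometric on the pattern space of a ray vector.\<close>
lemma dim_pattern_space_iter:
  assumes "ray_vector y"
  shows "dim (pattern_space UNIV y) \<le> dim (pattern_space UNIV ((sum_op ^^ s) y))"
proof -
  have "x = 0" if "x \<in> pattern_space UNIV y" "(sum_op ^^ s) x = 0" for x
    using ray_vector_norm_iter[OF ray_vector_pattern_space[OF assms that(1)], of s] that(2) by simp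
  then have "inj_on (sum_op ^^ s) (pattern_space UNIV y)"
    by (simp add: linear_inj_on_iff_eq_0[OF linear_sum_op_iter subspace_pattern_space])
  then have "dim ((sum_op ^^ s) ` pattern_space UNIV y) = dim (pattern_space UNIV y)"
    using dim_image_eq[OF linear_sum_op_iter] span_eq_iff[THEN iffD2, OF subspace_pattern_space]
    by metis
  then show ?thesis
    using dim_subset[OF sum_op_iter_image_pattern_space, of s y] by linarith
qed

lemma kernel_of_limit:
  assumes lim: "W \<longlonglongrightarrow> w" and prod: "(\<lambda>j. norm (A (W j)) * norm (B (W j))) \<longlonglongrightarrow> 0"
  shows "A w = 0 \<or> B w = 0"
proof -
  have "(\<lambda>j. norm (A (W j)) * norm (B (W j))) \<longlonglongrightarrow> norm (A w) * norm (B w)"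
    by (intro tendsto_intros tendsto_linear[OF linear_A lim] tendsto_linear[OF linear_B lim])
  then have "norm (A w) * norm (B w) = 0"
    using prod LIMSEQ_unique by blast
  then show ?thesis by simp
qed

lemma ray_vector_limit:
  assumes ray: "\<And>j. ray_vector (X j)" and lim: "X \<longlonglongrightarrow> z"
  shows "ray_vector z"
  unfolding ray_vector_def
proof
  fix t
  have "A ((sum_op ^^ t) (X j)) = 0 \<or> B ((sum_op ^^ t) (X j)) = 0" for j
    using ray[of j] unfolding ray_vector_def by blast
  then have "(\<lambda>j. norm (A ((sum_op ^^ t) (X j))) * norm (B ((sum_op ^^ t) (X j)))) = (\<lambda>j. 0)"
    by (metis mult_zero_left mult_zero_right norm_zero)
  then have "(\<lambda>j. norm (A ((sum_op ^^ t) (X j))) * norm (B ((sum_op ^^ t) (X j)))) \<longlonglongrightarrow> 0"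
    by simp
  with tendsto_linear[OF linear_sum_op_iter lim]
  show "A ((sum_op ^^ t) z) = 0 \<or> B ((sum_op ^^ t) z) = 0"
    by (rule kernel_of_limit)
qed

text \<open>Near a non-zero vector killed by exactly one of \<^term>\<open>A\<close>, \<^term>\<open>B\<close>, the other one
  does not vanish, so vectors killed by one of them are killed by the same one.\<close>
lemma eventually_same_kernel:
  assumes lim: "W \<longlonglongrightarrow> w" and "w \<noteq> 0" and kernel: "\<And>j. A (W j) = 0 \<or> B (W j) = 0"
  shows "eventually (\<lambda>j. (A w = 0 \<longrightarrow> A (W j) = 0) \<and> (B w = 0 \<longrightarrow> B (W j) = 0)) sequentially"
proof -
  have "eventually (\<lambda>j. C w \<noteq> 0 \<longrightarrow> C (W j) \<noteq> 0) sequentially" if "linear C" for C :: "'a \<Rightarrow> 'a"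
    using tendsto_imp_eventually_ne[OF tendsto_linear[OF that lim]] by (cases "C w = 0") simp_all
  from eventually_conj[OF this[OF linear_A] this[OF linear_B]] show ?thesis
    by (rule eventually_mono) (use kernel common_kernel_zero \<open>w \<noteq> 0\<close> in blast)
qed

lemma eventually_pattern_space_subset:
  assumes ray: "\<And>j. ray_vector (X j)" and lim: "X \<longlonglongrightarrow> z" and "ray_vector z" "z \<noteq> 0"
  shows "eventually (\<lambda>j. pattern_space UNIV (X j) \<subseteq> pattern_space {..<L} z) sequentially"
proof -
  have "\<forall>t\<in>{..<L}. eventually (\<lambda>j. (A ((sum_op ^^ t) z) = 0 \<longrightarrow> A ((sum_op ^^ t) (X j)) = 0)
                               \<and> (B ((sum_op ^^ t) z) = 0 \<longrightarrow> B ((sum_op ^^ t) (X j)) = 0)) sequentially"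
  proof
    fix t
    have "(sum_op ^^ t) z \<noteq> 0"
      using ray_vector_norm_iter[OF \<open>ray_vector z\<close>, of t] \<open>z \<noteq> 0\<close> by auto
    with ray show "eventually (\<lambda>j. (A ((sum_op ^^ t) z) = 0 \<longrightarrow> A ((sum_op ^^ t) (X j)) = 0)
                               \<and> (B ((sum_op ^^ t) z) = 0 \<longrightarrow> B ((sum_op ^^ t) (X j)) = 0)) sequentially"
      by (intro eventually_same_kernel tendsto_linear[OF linear_sum_op_iter lim])
         (auto simp: ray_vector_def)
  qed
  then have "eventually (\<lambda>j. \<forall>t\<in>{..<L}. (A ((sum_op ^^ t) z) = 0 \<longrightarrow> A ((sum_op ^^ t) (X j)) = 0)
                               \<and> (B ((sum_op ^^ t) z) = 0 \<longrightarrow> B ((sum_op ^^ t) (X j)) = 0)) sequentially"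
    by (simp add: eventually_ball_finite)
  then show ?thesis
    by (rule eventually_mono) (auto simp: pattern_space_def)
qed

lemma ex_finite_horizon_pattern_space: "\<exists>L. pattern_space {..<L} y \<subseteq> pattern_space UNIV y"
proof -
  have "decseq (\<lambda>L. pattern_space {..<L} y)"
    by (simp add: decseq_def pattern_space_antimono)
  then obtain L where L: "pattern_space {..<L} y \<subseteq> (\<Inter>L. pattern_space {..<L} y)"
    using subspace_decseq_stabilizes[of "\<lambda>L. pattern_space {..<L} y", OF subspace_pattern_space] by blast
  have "(\<Inter>L. pattern_space {..<L} y) \<subseteq> pattern_space UNIV y"
    unfolding pattern_space_def by blast
  with L show ?thesis by blast
qed

lemma eventually_pattern_space_eq:
  assumes ray: "\<And>j. ray_vector (X j)" and lim: "X \<longlonglongrightarrow> z" and "z \<noteq> 0"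
    and dim_le: "\<And>j. dim (pattern_space UNIV z) \<le> dim (pattern_space UNIV (X j))"
  shows "eventually (\<lambda>j. pattern_space UNIV (X j) = pattern_space UNIV z) sequentially"
proof -
  have "ray_vector z"
    using ray lim by (rule ray_vector_limit)
  obtain L where L: "pattern_space {..<L} z \<subseteq> pattern_space UNIV z"
    using ex_finite_horizon_pattern_space by blast
  from eventually_pattern_space_subset[OF ray lim \<open>ray_vector z\<close> \<open>z \<noteq> 0\<close>, of L] show ?thesis
  proof (rule eventually_mono)
    fix j
    assume "pattern_space UNIV (X j) \<subseteq> pattern_space {..<L} z"
    with L have "pattern_space UNIV (X j) \<subseteq> pattern_space UNIV z"
      by blast
    then show "pattern_space UNIV (X j) = pattern_space UNIV z"
      using dim_le[of j] by (rule subspace_dim_equal[OF subspace_pattern_space subspace_pattern_space])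
  qed
qed

lemma pattern_space_recurs:
  assumes y: "ray_vector y" "y \<noteq> 0"
    and max: "\<And>x. ray_vector x \<Longrightarrow> x \<noteq> 0 \<Longrightarrow> dim (pattern_space UNIV x) \<le> dim (pattern_space UNIV y)"
  shows "\<exists>i j. i < j \<and> pattern_space UNIV ((sum_op ^^ i) y) = pattern_space UNIV ((sum_op ^^ j) y)"
proof -
  define ys where "ys n = (sum_op ^^ n) y" for n
  have ray_ys: "ray_vector (ys n)" for n
    using ray_vector_iter[OF y(1)] by (simp add: ys_def)
  have norm_ys: "norm (ys n) = norm y" for n
    using ray_vector_norm_iter[OF y(1)] by (simp add: ys_def)
  have dim_ys: "dim (pattern_space UNIV (ys n)) = dim (pattern_space UNIV y)" for n
  proof -
    have "ys n \<noteq> 0"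
      using norm_ys y(2) by (metis norm_eq_zero)
    then show ?thesis
      using dim_pattern_space_iter[OF y(1), of n] max[OF ray_ys] by (simp add: ys_def le_antisym)
  qed
  have "bounded (range ys)"
    using norm_ys by (auto simp: bounded_iff)
  then obtain z a where a: "strict_mono a" and lim: "(\<lambda>j. ys (a j)) \<longlonglongrightarrow> z"
    using bounded_imp_convergent_subsequence unfolding o_def by blast
  have "norm z = norm y"
    using tendsto_norm[OF lim] norm_ys by (simp add: LIMSEQ_const_iff)
  then have "z \<noteq> 0"
    using y(2) by auto
  have "dim (pattern_space UNIV z) \<le> dim (pattern_space UNIV (ys (a j)))" for j
    using max[OF ray_vector_limit[OF ray_ys lim] \<open>z \<noteq> 0\<close>] unfolding dim_ys .
  from eventually_pattern_space_eq[OF ray_ys lim \<open>z \<noteq> 0\<close> this]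
  obtain J where "\<And>j. j \<ge> J \<Longrightarrow> pattern_space UNIV (ys (a j)) = pattern_space UNIV z"
    unfolding eventually_sequentially by blast
  moreover have "a J < a (Suc J)"
    using a by (simp add: strict_mono_Suc_iff)
  ultimately show ?thesis
    unfolding ys_def by (intro exI[of _ "a J"] exI[of _ "a (Suc J)"]) simp
qed

lemma periodic_kernel_pattern:
  assumes "pattern_space UNIV y = pattern_space UNIV ((sum_op ^^ p) y)"
  shows "A ((sum_op ^^ (t + p)) y) = 0 \<longleftrightarrow> A ((sum_op ^^ t) y) = 0"
proof -
  have "y \<in> pattern_space UNIV ((sum_op ^^ p) y)"
    using self_in_pattern_space[of y UNIV] unfolding assms .
  moreover have "(sum_op ^^ p) y \<in> pattern_space UNIV y"
    using self_in_pattern_space[of "(sum_op ^^ p) y" UNIV] unfolding assms[symmetric] .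
  ultimately show ?thesis
    unfolding pattern_space_def mem_Collect_eq sum_op_iter_iter by blast
qed

lemma ex_periodic_ray_vector:
  assumes "ray_vector x" "x \<noteq> 0"
  shows "\<exists>y p. ray_vector y \<and> y \<noteq> 0 \<and> p > 0
                \<and> (\<forall>t. A ((sum_op ^^ (t + p)) y) = 0 \<longleftrightarrow> A ((sum_op ^^ t) y) = 0)"
proof -
  have "\<forall>y. ray_vector y \<and> y \<noteq> 0 \<longrightarrow> dim (pattern_space UNIV y) < Suc DIM('a)"
    by (simp add: dim_subset_UNIV less_Suc_eq_le)
  with assms obtain y where y: "ray_vector y" "y \<noteq> 0"
    and max: "\<And>x. ray_vector x \<Longrightarrow> x \<noteq> 0 \<Longrightarrow> dim (pattern_space UNIV x) \<le> dim (pattern_space UNIV y)"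
    using ex_has_greatest_nat[of "\<lambda>y. ray_vector y \<and> y \<noteq> 0" x "\<lambda>y. dim (pattern_space UNIV y)"
        "Suc DIM('a)"]
    by blast
  obtain i j where "i < j" and eq: "pattern_space UNIV ((sum_op ^^ i) y) = pattern_space UNIV ((sum_op ^^ j) y)"
    using pattern_space_recurs[OF y max] by blast
  have shifted: "pattern_space UNIV ((sum_op ^^ i) y)
        = pattern_space UNIV ((sum_op ^^ (j - i)) ((sum_op ^^ i) y))"
    using eq \<open>i < j\<close> by (simp add: sum_op_iter_iter)
  have "\<forall>t. A ((sum_op ^^ (t + (j - i))) ((sum_op ^^ i) y)) = 0
                \<longleftrightarrow> A ((sum_op ^^ t) ((sum_op ^^ i) y)) = 0"
    using periodic_kernel_pattern[OF shifted] by blast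
  moreover have "(sum_op ^^ i) y \<noteq> 0"
    using ray_vector_norm_iter[OF y(1), of i] y(2) by auto
  moreover have "j - i > 0"
    using \<open>i < j\<close> by simp
  ultimately show ?thesis
    using ray_vector_iter[OF y(1), of i] by blast
qed

lemma norm_split_choice:
  assumes "y = A x \<or> y = B x"
  shows "norm y ^ 2 + norm (sum_op x - y) ^ 2 = norm x ^ 2"
  using assms norm_split[of x] by (auto simp: sum_op_def add.commute)

context
  fixes v :: "nat \<Rightarrow> 'a"
  assumes traj: "\<And>n. v (Suc n) = A (v n) \<or> v (Suc n) = B (v n)"
begin

lemma trajectory_norm_decseq: "decseq (\<lambda>n. norm (v n))"
proof (rule decseq_SucI)
  fix n
  have "norm (v (Suc n)) ^ 2 \<le> norm (v n) ^ 2"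
    using norm_split_choice[OF traj[of n]] zero_le_power2[of "norm (sum_op (v n) - v (Suc n))"]
    by linarith
  then show "norm (v (Suc n)) \<le> norm (v n)"
    by (meson norm_ge_zero power2_le_imp_le)
qed

lemma trajectory_defect_tendsto: "(\<lambda>n. sum_op (v n) - v (Suc n)) \<longlonglongrightarrow> 0"
proof -
  obtain L where L: "(\<lambda>n. norm (v n)) \<longlonglongrightarrow> L"
    using decseq_convergent[OF trajectory_norm_decseq, of 0] by auto
  have "(\<lambda>n. norm (v n) ^ 2 - norm (v (Suc n)) ^ 2) \<longlonglongrightarrow> L ^ 2 - L ^ 2"
    by (intro tendsto_diff tendsto_power L LIMSEQ_Suc)
  moreover have "norm (v n) ^ 2 - norm (v (Suc n)) ^ 2 = norm (sum_op (v n) - v (Suc n)) ^ 2" for n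
    using norm_split_choice[OF traj[of n]] by simp
  ultimately have "(\<lambda>n. norm (sum_op (v n) - v (Suc n)) ^ 2) \<longlonglongrightarrow> 0"
    by simp
  from tendsto_real_sqrt[OF this] have "(\<lambda>n. norm (sum_op (v n) - v (Suc n))) \<longlonglongrightarrow> 0"
    by simp
  then show ?thesis
    by (rule tendsto_norm_zero_cancel)
qed

lemma trajectory_shift_tendsto: "(\<lambda>n. v (n + t) - (sum_op ^^ t) (v n)) \<longlonglongrightarrow> 0"
proof (induction t)
  case 0
  show ?case by simp
next
  case (Suc t)
  note lin = linear_sum_op
  have eq: "v (n + Suc t) - (sum_op ^^ Suc t) (v n)
      = sum_op (v (n + t) - (sum_op ^^ t) (v n)) - (sum_op (v (n + t)) - v (Suc (n + t)))" for n
    by (simp add: linear_diff[OF lin] algebra_simps)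
  have "(\<lambda>n. sum_op (v (n + t) - (sum_op ^^ t) (v n)) - (sum_op (v (n + t)) - v (Suc (n + t))))
      \<longlonglongrightarrow> sum_op 0 - 0"
    using tendsto_linear[OF lin Suc.IH] LIMSEQ_ignore_initial_segment[OF trajectory_defect_tendsto, of t]
    by (intro tendsto_diff) simp_all
  then show ?case
    unfolding eq linear_0[OF lin] by simp
qed

lemma trajectory_kernel_product_tendsto: "(\<lambda>n. norm (A (v n)) * norm (B (v n))) \<longlonglongrightarrow> 0"
proof (rule Lim_null_comparison)
  have "norm (A (v n)) * norm (B (v n)) = norm (sum_op (v n) - v (Suc n)) * norm (v (Suc n))" for n
    using traj[of n] by (auto simp: sum_op_def)
  moreover have "norm (v (Suc n)) \<le> norm (v 0)" for n
    using trajectory_norm_decseq by (simp add: decseq_def)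
  ultimately have "norm (A (v n)) * norm (B (v n)) \<le> norm (sum_op (v n) - v (Suc n)) * norm (v 0)" for n
    by (simp add: mult_left_mono)
  then show "eventually (\<lambda>n. norm (norm (A (v n)) * norm (B (v n)))
                               \<le> norm (sum_op (v n) - v (Suc n)) * norm (v 0)) sequentially"
    by simp
  show "(\<lambda>n. norm (sum_op (v n) - v (Suc n)) * norm (v 0)) \<longlonglongrightarrow> 0"
    using tendsto_mult_left_zero[OF tendsto_norm_zero[OF trajectory_defect_tendsto]] by simp
qed

text \<open>At a limit point the trajectory is shadowed by the orbit under \<^term>\<open>sum_op\<close>, because the
  dropped components tend to zero.\<close>
lemma ray_vector_trajectory_limit:
  assumes a: "strict_mono a" and lim: "(\<lambda>j. v (a j)) \<longlonglongrightarrow> \<eta>"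
  shows "ray_vector \<eta>"
  unfolding ray_vector_def
proof
  fix t
  have a_t: "strict_mono (\<lambda>j. a j + t)"
    using a by (simp add: strict_mono_def)
  have "(\<lambda>j. (v (a j + t) - (sum_op ^^ t) (v (a j))) + (sum_op ^^ t) (v (a j))) \<longlonglongrightarrow> 0 + (sum_op ^^ t) \<eta>"
    using LIMSEQ_subseq_LIMSEQ[OF trajectory_shift_tendsto a] tendsto_linear[OF linear_sum_op_iter lim]
    by (intro tendsto_add) (simp_all add: o_def)
  then have "(\<lambda>j. v (a j + t)) \<longlonglongrightarrow> (sum_op ^^ t) \<eta>"
    by simp
  moreover have "(\<lambda>j. norm (A (v (a j + t))) * norm (B (v (a j + t)))) \<longlonglongrightarrow> 0"
    using LIMSEQ_subseq_LIMSEQ[OF trajectory_kernel_product_tendsto a_t] by (simp add: o_def)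
  ultimately show "A ((sum_op ^^ t) \<eta>) = 0 \<or> B ((sum_op ^^ t) \<eta>) = 0"
    by (rule kernel_of_limit)
qed

lemma ex_ray_vector_of_trajectory:
  assumes "\<not> (\<lambda>n. norm (v n)) \<longlonglongrightarrow> 0"
  shows "\<exists>\<eta>. ray_vector \<eta> \<and> \<eta> \<noteq> 0"
proof -
  obtain L where L: "(\<lambda>n. norm (v n)) \<longlonglongrightarrow> L" "\<And>n. L \<le> norm (v n)"
    using decseq_convergent[OF trajectory_norm_decseq, of 0] by auto
  have "L \<noteq> 0"
    using L(1) assms by auto
  moreover have "0 \<le> L"
    using L(1) by (rule LIMSEQ_le_const) simp
  ultimately have "L > 0"
    by simp
  have "norm (v n) \<le> norm (v 0)" for n
    using trajectory_norm_decseq by (simp add: decseq_def)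
  then have "bounded (range v)"
    by (auto simp: bounded_iff)
  then obtain \<eta> a where a: "strict_mono a" and lim: "(\<lambda>j. v (a j)) \<longlonglongrightarrow> \<eta>"
    using bounded_imp_convergent_subsequence unfolding o_def by blast
  have "ray_vector \<eta>"
    using a lim by (rule ray_vector_trajectory_limit)
  moreover have "L \<le> norm \<eta>"
    by (rule LIMSEQ_le_const[OF tendsto_norm[OF lim]]) (use L(2) in auto)
  ultimately show ?thesis
    using \<open>L > 0\<close> by auto
qed

end

lemma periodic_ray_of_periodic_pattern:
  assumes ray: "ray_vector y" and "p > 0"
    and per: "\<And>t. A ((sum_op ^^ (t + p)) y) = 0 \<longleftrightarrow> A ((sum_op ^^ t) y) = 0"
  shows "\<exists>r. periodic_ray r
              \<and> (\<forall>n. fold (\<lambda>b x. if b then B x else A x) (ray_prefix r n) y = (sum_op ^^ n) y)"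
proof -
  define r where "r t \<longleftrightarrow> A ((sum_op ^^ t) y) = 0" for t
  have r_shift: "r (t + k * p) = r t" for t k
  proof (induction k)
    case (Suc k)
    have "t + Suc k * p = (t + k * p) + p"
      by simp
    with Suc.IH per[of "t + k * p"] show ?case
      unfolding r_def by metis
  qed simp
  have r_mod: "r t = r (t mod p)" for t
    using r_shift[of "t mod p" "t div p"] by (simp add: mod_div_mult_eq)
  have "periodic_ray r"
    unfolding periodic_ray_def
    by (intro exI[of _ "map r [0..<p]"]) (use \<open>p > 0\<close> r_mod in auto)
  moreover have "fold (\<lambda>b x. if b then B x else A x) (ray_prefix r n) y = (sum_op ^^ n) y" for n
  proof (induction n)
    case (Suc n)
    have "A ((sum_op ^^ n) y) = 0 \<or> B ((sum_op ^^ n) y) = 0"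
      using ray by (simp add: ray_vector_def)
    with Suc.IH show ?case
      by (auto simp: ray_prefix_def r_def sum_op_of_kernel_A sum_op_of_kernel_B)
  qed (simp add: ray_prefix_def)
  ultimately show ?thesis
    by blast
qed

lemma ex_periodic_ray_orbit:
  assumes "ray_vector x" "x \<noteq> 0"
  shows "\<exists>y r. ray_vector y \<and> y \<noteq> 0 \<and> periodic_ray r
                \<and> (\<forall>n. fold (\<lambda>b x. if b then B x else A x) (ray_prefix r n) y = (sum_op ^^ n) y)"
proof -
  obtain y p where y: "ray_vector y" "y \<noteq> 0" "p > 0"
    and per: "\<And>t. A ((sum_op ^^ (t + p)) y) = 0 \<longleftrightarrow> A ((sum_op ^^ t) y) = 0"
    using ex_periodic_ray_vector[OF assms] by blast
  obtain r where "periodic_ray r"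
    and "\<forall>n. fold (\<lambda>b x. if b then B x else A x) (ray_prefix r n) y = (sum_op ^^ n) y"
    using periodic_ray_of_periodic_pattern[OF y(1) y(3) per] by blast
  with y show ?thesis
    by blast
qed

end

lemma inner_matrix_vector_mult_adjoint:
  fixes M :: "complex ^ 'n ^ 'n"
  shows "(M *v x) \<bullet> y = x \<bullet> (adjoint_mat M *v y)"
proof -
  have inner_complex: "a \<bullet> b = Re (a * cnj b)" for a b :: complex
    by (simp add: inner_complex_def)
  have "(M *v x) \<bullet> y = (\<Sum>i\<in>UNIV. \<Sum>j\<in>UNIV. Re (M $ i $ j * x $ j * cnj (y $ i)))"
    by (simp add: inner_vec_def matrix_vector_mult_def inner_complex sum_distrib_right)
  also have "\<dots> = (\<Sum>j\<in>UNIV. \<Sum>i\<in>UNIV. Re (M $ i $ j * x $ j * cnj (y $ i)))"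
    by (rule sum.swap)
  also have "\<dots> = x \<bullet> (adjoint_mat M *v y)"
    by (simp add: inner_vec_def matrix_vector_mult_def inner_complex adjoint_mat_def
        sum_distrib_left mult_ac)
  finally show ?thesis .
qed

lemma P_module_isometric_splitting:
  fixes A B :: "complex ^ 'n ^ 'n"
  assumes "P_module A B"
  shows "isometric_splitting ((*v) A) ((*v) B)"
proof -
  have "norm (A *v x) ^ 2 + norm (B *v x) ^ 2 = norm x ^ 2" for x :: "complex ^ 'n"
  proof -
    have "norm (A *v x) ^ 2 + norm (B *v x) ^ 2
      = x \<bullet> (adjoint_mat A *v (A *v x)) + x \<bullet> (adjoint_mat B *v (B *v x))"
    by (simp add: power2_norm_eq_inner inner_matrix_vector_mult_adjoint)
  also have "\<dots> = x \<bullet> ((adjoint_mat A ** A + adjoint_mat B ** B) *v x)"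
    by (simp add: matrix_vector_mul_assoc matrix_vector_mult_add_rdistrib inner_add_right)
  also have "\<dots> = norm x ^ 2"
    using assms by (simp add: P_module_def power2_norm_eq_inner)
    finally show ?thesis .
  qed
  then show ?thesis
    by (intro isometric_splitting.intro matrix_vector_mul_linear)
qed

lemma word_act_eq_fold: "word_act A B w \<xi> = fold (\<lambda>b x. if b then B *v x else A *v x) w \<xi>"
proof -
  have "(\<lambda>b x. (if b then B else A) *v x) = (\<lambda>b x. if b then B *v x else A *v x)"
    by (simp add: fun_eq_iff)
  then show ?thesis
    by (simp add: word_act_def)
qed

theorem proposition2p10:
  fixes A B :: "complex ^ 'n ^ 'n"
  assumes "P_module A B"
  shows "(\<forall>\<xi>::complex ^ 'n. \<xi> \<noteq> 0 \<longrightarrow> annihilated_by_all_rays A B \<xi>)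
         \<or> (\<exists>\<xi> p. periodic_ray p \<and> contained_in_ray A B \<xi> p)"
proof -
  interpret isometric_splitting "(*v) A" "(*v) B"
    using assms by (rule P_module_isometric_splitting)
  have "\<exists>\<xi> p. periodic_ray p \<and> contained_in_ray A B \<xi> p"
    if non_annihilated: "\<not> annihilated_by_all_rays A B \<xi>" for \<xi> :: "complex ^ 'n"
  proof -
    obtain q where q: "\<not> (\<lambda>n. norm (word_act A B (ray_prefix q n) \<xi>)) \<longlonglongrightarrow> 0"
      using non_annihilated unfolding annihilated_by_all_rays_def by blast
    have "word_act A B (ray_prefix q (Suc n)) \<xi> = A *v word_act A B (ray_prefix q n) \<xi>
        \<or> word_act A B (ray_prefix q (Suc n)) \<xi> = B *v word_act A B (ray_prefix q n) \<xi>" for n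
      by (simp add: word_act_def ray_prefix_def)
    from ex_ray_vector_of_trajectory[OF this q] obtain \<eta> where "ray_vector \<eta>" "\<eta> \<noteq> 0"
      by blast
    then obtain y r where y: "ray_vector y" "y \<noteq> 0" and "periodic_ray r"
      and orbit: "\<forall>n. fold (\<lambda>b x. if b then B *v x else A *v x) (ray_prefix r n) y = (sum_op ^^ n) y"
      using ex_periodic_ray_orbit by blast
    moreover have "contained_in_ray A B y r"
      using y orbit ray_vector_norm_iter by (simp add: contained_in_ray_def word_act_eq_fold)
    ultimately show ?thesis
      by blast
  qed
  then show ?thesis
    by blast
qed

end
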